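(* Let $k>0$ be real, let $M=\begin{bmatrix} k-1 & k-1 & k\\ 1&0&0\\ 0&1&0\end{bmatrix}$ and $$N_0=\begin{bmatrix} k-1 & 2k & 2k\\ 2 & 1-k & 2\\ \frac{2}{k} & \frac{2}{k} & -\frac{1}{k}(k^2+k-2)\end{bmatrix}.$$ For every integer $n\ge 1$, $$N_0M^{n}=\begin{bmatrix} j_{n+1} & t_{n-1} & kj_{n}\\ j_{n} & t_{n-2} & kj_{n-1}\\ j_{n-1} & t_{n-3} & kj_{n-2}\end{bmatrix},$$ where $t_{m}=(k-1)j_{m+1}+kj_{m}$ for every integer $m$.
   Context: For real $k>0$, the third-order $k$-Jacobsthal--Lucas sequence $(j_n)=(j_n^{(3)}(k))$ is defined by $j_0=2$, $j_1=k-1$, $j_2=k^2+1$ and $j_{n+3}=(k-1)j_{n+2}+(k-1)j_{n+1}+kj_n$. It is extended to all negative indices by running this recurrence backwards, i.e. $j_{m}=\frac{1}{k}\left(j_{m+3}-(k-1)j_{m+2}-(k-1)j_{m+1}\right)$. *)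

theory Defs
  imports "HOL-Analysis.Analysis"
begin

fun jpos :: "real \<Rightarrow> nat \<Rightarrow> real" where
  "jpos k 0 = 2"
| "jpos k (Suc 0) = k - 1"
| "jpos k (Suc (Suc 0)) = k^2 + 1"
| "jpos k (Suc (Suc (Suc n))) =
     (k - 1) * jpos k (Suc (Suc n)) + (k - 1) * jpos k (Suc n) + k * jpos k n"

text \<open>Backward extension: jback k n = j_{2-n}, computed by running the recurrence backwards.\<close>
fun jback :: "real \<Rightarrow> nat \<Rightarrow> real" where
  "jback k 0 = k^2 + 1"
| "jback k (Suc 0) = k - 1"
| "jback k (Suc (Suc 0)) = 2"
| "jback k (Suc (Suc (Suc n))) =
     (jback k n - (k - 1) * jback k (Suc n) - (k - 1) * jback k (Suc (Suc n))) / k"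

definition jl :: "real \<Rightarrow> int \<Rightarrow> real" where
  "jl k m = (if 0 \<le> m then jpos k (nat m) else jback k (nat (2 - m)))"

definition tl3 :: "real \<Rightarrow> int \<Rightarrow> real" where
  "tl3 k m = (k - 1) * jl k (m + 1) + k * jl k m"

fun matpow :: "real^'n^'n \<Rightarrow> nat \<Rightarrow> real^'n^'n" where
  "matpow A 0 = mat 1"
| "matpow A (Suc n) = matpow A n ** A"

end

theory Submission
  imports Defs
begin

text \<open>Write R(n) for the right-hand side, whose rows are (j(m+1), t(m-1), k j(m)) for
  m = n, n-1, n-2. Multiplying such a row by M gives (j(m+2), t(m), k j(m+1)): the first
  entry is the recurrence, the second the definition of t, the third a shift. Hence
  R(n) M = R(n+1), and N0 M^n = R(n) follows by induction from R(0) = N0, which is an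
  evaluation of j(1), j(0), j(-1), j(-2). Since the backward extension runs the recurrence
  in reverse, the recurrence holds at every integer index, which lets the induction start
  at n = 0.\<close>

lemma matpow_orbit:
  assumes "\<And>n. F n ** A = F (Suc n)"
  shows "F 0 ** matpow A n = F n"
proof (induction n)
  case 0
  show ?case by simp
next
  case (Suc n)
  have "F 0 ** matpow A (Suc n) = (F 0 ** matpow A n) ** A"
    by (simp add: matrix_mul_assoc)
  also have "\<dots> = F (Suc n)"
    using Suc.IH assms by simp
  finally show ?case .
qed

lemma jl_eq_jpos: "0 \<le> m \<Longrightarrow> jl k m = jpos k (nat m)"
  by (simp add: jl_def)

lemma jl_eq_jback: "m \<le> 2 \<Longrightarrow> jl k m = jback k (nat (2 - m))"
proof (cases "m < 0")
  case False
  moreover assume "m \<le> 2"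
  ultimately have "m = 0 \<or> m = 1 \<or> m = 2" by auto
  then show ?thesis
    by (auto simp: jl_def numeral_2_eq_2)
qed (simp add: jl_def)

lemma jl_recurrence:
  assumes "k \<noteq> 0"
  shows "jl k (m + 3) = (k - 1) * jl k (m + 2) + (k - 1) * jl k (m + 1) + k * jl k m"
proof (cases "0 \<le> m")
  case True
  then obtain p where m: "m = int p"
    using nonneg_int_cases by blast
  have "jpos k (p + 3) = (k - 1) * jpos k (p + 2) + (k - 1) * jpos k (p + 1) + k * jpos k p"
    by (simp add: numeral_eq_Suc)
  then show ?thesis
    by (simp add: m jl_eq_jpos nat_add_distrib)
next
  case False
  define q where "q = nat (- 1 - m)"
  have "jl k (m + 3) = jback k q" "jl k (m + 2) = jback k (q + 1)"
    "jl k (m + 1) = jback k (q + 2)" "jl k m = jback k (q + 3)"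
    using False by (subst jl_eq_jback; force simp: q_def intro!: arg_cong[where f = "jback k"])+
  moreover have "jback k (q + 3) =
      (jback k q - (k - 1) * jback k (q + 1) - (k - 1) * jback k (q + 2)) / k"
    by (simp add: numeral_eq_Suc)
  ultimately show ?thesis
    using assms by (simp add: field_simps)
qed

lemma tl3_eq_jl_diff:
  assumes "k \<noteq> 0"
  shows "tl3 k m = jl k (m + 3) - (k - 1) * jl k (m + 2)"
  using jl_recurrence[OF assms, of m] by (simp add: tl3_def add.commute)

lemma jl_initial: "jl k 0 = 2" "jl k 1 = k - 1" "jl k 2 = k^2 + 1"
  by (simp_all add: jl_def numeral_2_eq_2)

lemma jl_minus_one:
  assumes "k \<noteq> 0"
  shows "jl k (-1) = 2 / k"
proof -
  have "jl k 2 = (k - 1) * jl k 1 + (k - 1) * jl k 0 + k * jl k (-1)"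
    using jl_recurrence[OF assms, of "-1"] by simp
  then show ?thesis
    using assms by (simp add: jl_initial field_simps power2_eq_square)
qed

lemma jl_minus_two:
  assumes "k \<noteq> 0"
  shows "k * jl k (-2) = - (1 / k) * (k^2 + k - 2)"
proof -
  have "jl k 1 = (k - 1) * jl k 0 + (k - 1) * jl k (-1) + k * jl k (-2)"
    using jl_recurrence[OF assms, of "-2"] by simp
  then show ?thesis
    using assms by (simp add: jl_initial jl_minus_one field_simps power2_eq_square)
qed

definition jl_companion :: "real \<Rightarrow> real^3^3" where
  "jl_companion k = vector [vector [k - 1, k - 1, k], vector [1, 0, 0], vector [0, 1, 0]]"

definition jl_matrix :: "real \<Rightarrow> int \<Rightarrow> real^3^3" where
  "jl_matrix k n = vector [vector [jl k (n + 1), tl3 k (n - 1), k * jl k n],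
                           vector [jl k n, tl3 k (n - 2), k * jl k (n - 1)],
                           vector [jl k (n - 1), tl3 k (n - 3), k * jl k (n - 2)]]"

lemma jl_matrix_mult_companion:
  assumes "k \<noteq> 0"
  shows "jl_matrix k n ** jl_companion k = jl_matrix k (n + 1)"
proof -
  have rec: "jl k (m + 1) = (k - 1) * jl k m + (k - 1) * jl k (m - 1) + k * jl k (m - 2)" for m
    using jl_recurrence[OF assms, of "m - 2"] by (simp add: algebra_simps)
  show ?thesis
    unfolding jl_matrix_def jl_companion_def
    using rec[of "n + 1"] rec[of n] rec[of "n - 1"]
    by (simp add: vec_eq_iff forall_3 matrix_matrix_mult_def sum_3 tl3_def algebra_simps)
qed

lemma jl_matrix_zero:
  assumes "k \<noteq> 0"
  shows "jl_matrix k 0 = vector [vector [k - 1, 2 * k, 2 * k],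
                                 vector [2, 1 - k, 2],
                                 vector [2 / k, 2 / k, - (1 / k) * (k^2 + k - 2)]]"
proof -
  have "tl3 k (-3) = 2 / k" "tl3 k (-2) = 1 - k" "tl3 k (-1) = 2 * k"
    using assms by (simp_all add: tl3_eq_jl_diff jl_initial jl_minus_one field_simps power2_eq_square)
  then show ?thesis
    unfolding jl_matrix_def using assms
    by (simp add: vec_eq_iff forall_3 jl_initial jl_minus_one jl_minus_two)
qed

theorem mainTheorem2:
  fixes k :: real and n :: nat
  assumes "k > 0" and "n \<ge> 1"
  shows "(vector [vector [k - 1, 2 * k, 2 * k],
                  vector [2, 1 - k, 2],
                  vector [2 / k, 2 / k, - (1 / k) * (k^2 + k - 2)]] :: real^3^3)
         ** matpow (vector [vector [k - 1, k - 1, k],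
                            vector [1, 0, 0],
                            vector [0, 1, 0]] :: real^3^3) n
       = (vector [vector [jl k (int n + 1), tl3 k (int n - 1), k * jl k (int n)],
                  vector [jl k (int n), tl3 k (int n - 2), k * jl k (int n - 1)],
                  vector [jl k (int n - 1), tl3 k (int n - 3), k * jl k (int n - 2)]] :: real^3^3)"
proof -
  have k: "k \<noteq> 0"
    using assms(1) by simp
  have "jl_matrix k 0 ** matpow (jl_companion k) n = jl_matrix k (int n)"
    by (rule matpow_orbit[where F = "\<lambda>n. jl_matrix k (int n)", simplified])
      (simp add: jl_matrix_mult_companion[OF k] add.commute)
  then show ?thesis
    unfolding jl_matrix_zero[OF k] unfolding jl_matrix_def jl_companion_def .
qed

end
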